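(* Let $G$ be a unit square graph and let $C$ be a maximal clique of $G$. Then there are vertices $v_1,v_2,v_3,v_4\in V(G)$ (not necessarily distinct) such that $C=\bigcap_{i=1}^4 N[v_i]$.
   Context: A unit square graph is a graph $G$ admitting $f\colon V(G)\to\mathbb{R}^2$ with $vw\in E(G)$ iff $\|f(v)-f(w)\|_\infty\le1$ for distinct $v,w$. $N[v]$ denotes the closed neighborhood of $v$. *)

theory Defs
  imports Main "HOL.Real"
begin

definition graph :: "'a set \<Rightarrow> ('a \<Rightarrow> 'a \<Rightarrow> bool) \<Rightarrow> bool" where
  "graph V E \<longleftrightarrow> (\<forall>v w. E v w \<longrightarrow> v \<in> V \<and> w \<in> V \<and> v \<noteq> w \<and> E w v)"

definition dist_inf :: "real \<times> real \<Rightarrow> real \<times> real \<Rightarrow> real" where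
  "dist_inf p q = max \<bar>fst p - fst q\<bar> \<bar>snd p - snd q\<bar>"

definition unit_square_graph :: "'a set \<Rightarrow> ('a \<Rightarrow> 'a \<Rightarrow> bool) \<Rightarrow> bool" where
  "unit_square_graph V E \<longleftrightarrow> graph V E \<and>
     (\<exists>f :: 'a \<Rightarrow> real \<times> real. \<forall>v\<in>V. \<forall>w\<in>V. v \<noteq> w \<longrightarrow>
        (E v w \<longleftrightarrow> dist_inf (f v) (f w) \<le> 1))"

definition closed_nbhd :: "'a set \<Rightarrow> ('a \<Rightarrow> 'a \<Rightarrow> bool) \<Rightarrow> 'a \<Rightarrow> 'a set" where
  "closed_nbhd V E v = {w \<in> V. w = v \<or> E v w}"

definition clique :: "'a set \<Rightarrow> ('a \<Rightarrow> 'a \<Rightarrow> bool) \<Rightarrow> 'a set \<Rightarrow> bool" where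
  "clique V E C \<longleftrightarrow> C \<subseteq> V \<and> (\<forall>v\<in>C. \<forall>w\<in>C. v \<noteq> w \<longrightarrow> E v w)"

definition maximal_clique :: "'a set \<Rightarrow> ('a \<Rightarrow> 'a \<Rightarrow> bool) \<Rightarrow> 'a set \<Rightarrow> bool" where
  "maximal_clique V E C \<longleftrightarrow> clique V E C \<and> (\<forall>D. clique V E D \<and> C \<subseteq> D \<longrightarrow> D = C)"

end

theory Submission
  imports Defs
begin

text \<open>Take the vertices of C with leftmost, rightmost, lowest and highest square centre.
  A common neighbour w of all four lies within sup-distance 1 of each of them, and since every
  centre of C lies in their bounding box, w is within sup-distance 1 of every vertex of C.
  So C plus w is a clique, and maximality forces w into C.\<close>

lemma dist_inf_le_if_in_bounding_box:
  assumes "fst l \<le> fst u" "fst u \<le> fst r" "snd b \<le> snd u" "snd u \<le> snd t"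
    and "dist_inf l w \<le> d" "dist_inf r w \<le> d" "dist_inf b w \<le> d" "dist_inf t w \<le> d"
  shows "dist_inf u w \<le> d"
  using assms unfolding dist_inf_def by auto

lemma closed_nbhd_eq_sup_ball:
  assumes rep: "\<forall>v\<in>V. \<forall>w\<in>V. v \<noteq> w \<longrightarrow> (E v w \<longleftrightarrow> dist_inf (f v) (f w) \<le> 1)"
    and "v \<in> V"
  shows "closed_nbhd V E v = {w \<in> V. dist_inf (f v) (f w) \<le> 1}"
proof -
  have "dist_inf (f v) (f v) \<le> 1" by (simp add: dist_inf_def)
  then show ?thesis
    using assms unfolding closed_nbhd_def by (smt (verit) Collect_cong)
qed

lemma clique_subset_closed_nbhd:
  assumes "clique V E C" "v \<in> C"
  shows "C \<subseteq> closed_nbhd V E v"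
  using assms unfolding clique_def closed_nbhd_def by auto

lemma maximal_clique_nonempty:
  assumes "maximal_clique V E C" "V \<noteq> {}"
  shows "C \<noteq> {}"
proof
  assume "C = {}"
  obtain v where "v \<in> V" using assms(2) by auto
  then have "clique V E {v}" unfolding clique_def by auto
  then show False using assms(1) \<open>C = {}\<close> unfolding maximal_clique_def by blast
qed

lemma maximal_clique_memI:
  assumes "graph V E" "maximal_clique V E C" "w \<in> V"
    and adj: "\<And>u. u \<in> C \<Longrightarrow> u \<noteq> w \<Longrightarrow> E u w"
  shows "w \<in> C"
proof -
  have "clique V E (insert w C)"
    using assms unfolding maximal_clique_def clique_def graph_def by blast
  then show ?thesis using assms(2) unfolding maximal_clique_def by blast
qed

lemma finite_extremal_point:
  fixes g :: "'a \<Rightarrow> real"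
  assumes "finite S" "S \<noteq> {}"
  obtains x where "x \<in> S" "\<And>y. y \<in> S \<Longrightarrow> g x \<le> g y"
  using ex_is_arg_min_if_finite[OF assms, of g] unfolding is_arg_min_linorder by blast

lemma maximal_clique_eq_closed_nbhd_inter_if_bounding_box:
  assumes "graph V E"
    and rep: "\<forall>v\<in>V. \<forall>w\<in>V. v \<noteq> w \<longrightarrow> (E v w \<longleftrightarrow> dist_inf (f v) (f w) \<le> 1)"
    and max: "maximal_clique V E C" and "l \<in> C" "r \<in> C" "b \<in> C" "t \<in> C"
    and left: "\<And>u. u \<in> C \<Longrightarrow> fst (f l) \<le> fst (f u)"
    and right: "\<And>u. u \<in> C \<Longrightarrow> fst (f u) \<le> fst (f r)"
    and bottom: "\<And>u. u \<in> C \<Longrightarrow> snd (f b) \<le> snd (f u)"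
    and top: "\<And>u. u \<in> C \<Longrightarrow> snd (f u) \<le> snd (f t)"
  shows "C = closed_nbhd V E l \<inter> closed_nbhd V E r \<inter> closed_nbhd V E b \<inter> closed_nbhd V E t"
    (is "C = ?N l \<inter> ?N r \<inter> ?N b \<inter> ?N t")
proof
  have cl: "clique V E C" using max unfolding maximal_clique_def by blast
  show "C \<subseteq> ?N l \<inter> ?N r \<inter> ?N b \<inter> ?N t"
    using clique_subset_closed_nbhd[OF cl] \<open>l \<in> C\<close> \<open>r \<in> C\<close> \<open>b \<in> C\<close> \<open>t \<in> C\<close> by auto
  have CV: "C \<subseteq> V" using cl unfolding clique_def by blast
  show "?N l \<inter> ?N r \<inter> ?N b \<inter> ?N t \<subseteq> C"
  proof
    fix w assume "w \<in> ?N l \<inter> ?N r \<inter> ?N b \<inter> ?N t"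
    then have "w \<in> V" and near: "dist_inf (f l) (f w) \<le> 1" "dist_inf (f r) (f w) \<le> 1"
      "dist_inf (f b) (f w) \<le> 1" "dist_inf (f t) (f w) \<le> 1"
      using closed_nbhd_eq_sup_ball[OF rep] CV \<open>l \<in> C\<close> \<open>r \<in> C\<close> \<open>b \<in> C\<close> \<open>t \<in> C\<close>
      by auto
    have "E u w" if "u \<in> C" "u \<noteq> w" for u
    proof -
      have "dist_inf (f u) (f w) \<le> 1"
        using dist_inf_le_if_in_bounding_box left right bottom top near \<open>u \<in> C\<close> by meson
      then show ?thesis using rep that CV \<open>w \<in> V\<close> by auto
    qed
    then show "w \<in> C" using maximal_clique_memI[OF \<open>graph V E\<close> max \<open>w \<in> V\<close>] by blast
  qed
qed

theorem mainTheorem8: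
  fixes V :: "'a set" and E :: "'a \<Rightarrow> 'a \<Rightarrow> bool" and C :: "'a set"
  assumes "finite V" and "V \<noteq> {}"
    and "unit_square_graph V E"
    and "maximal_clique V E C"
  shows "\<exists>v1\<in>V. \<exists>v2\<in>V. \<exists>v3\<in>V. \<exists>v4\<in>V.
           C = closed_nbhd V E v1 \<inter> closed_nbhd V E v2 \<inter> closed_nbhd V E v3 \<inter> closed_nbhd V E v4"
proof -
  obtain f where rep: "\<forall>v\<in>V. \<forall>w\<in>V. v \<noteq> w \<longrightarrow> (E v w \<longleftrightarrow> dist_inf (f v) (f w) \<le> 1)"
    and "graph V E"
    using assms(3) unfolding unit_square_graph_def by blast
  have CV: "C \<subseteq> V" using assms(4) unfolding maximal_clique_def clique_def by blast
  have fin: "finite C" "C \<noteq> {}"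
    using CV assms(1) finite_subset maximal_clique_nonempty[OF assms(4,2)] by auto
  obtain l where "l \<in> C" and "\<And>u. u \<in> C \<Longrightarrow> fst (f l) \<le> fst (f u)"
    using finite_extremal_point[OF fin, of "\<lambda>u. fst (f u)"] by blast
  moreover obtain r where "r \<in> C" and "\<And>u. u \<in> C \<Longrightarrow> fst (f u) \<le> fst (f r)"
    using finite_extremal_point[OF fin, of "\<lambda>u. - fst (f u)"] by auto
  moreover obtain b where "b \<in> C" and "\<And>u. u \<in> C \<Longrightarrow> snd (f b) \<le> snd (f u)"
    using finite_extremal_point[OF fin, of "\<lambda>u. snd (f u)"] by blast
  moreover obtain t where "t \<in> C" and "\<And>u. u \<in> C \<Longrightarrow> snd (f u) \<le> snd (f t)"
    using finite_extremal_point[OF fin, of "\<lambda>u. - snd (f u)"] by auto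
  ultimately have "C = closed_nbhd V E l \<inter> closed_nbhd V E r \<inter> closed_nbhd V E b \<inter> closed_nbhd V E t"
    using maximal_clique_eq_closed_nbhd_inter_if_bounding_box[OF \<open>graph V E\<close> rep assms(4)]
    by blast
  then show ?thesis using CV \<open>l \<in> C\<close> \<open>r \<in> C\<close> \<open>b \<in> C\<close> \<open>t \<in> C\<close> by blast
qed

end
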